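(* Let $\Gamma\le\mathrm{Iso}(\mathbb{R}^{r,s})$ be a subgroup whose centralizer in $\mathrm{Iso}(\mathbb{R}^{r,s})$ has an open orbit in $\mathbb{R}^{r,s}$, and let $n=r+s$. If the linear holonomy group $\mathrm{hol}(\Gamma)$ is non-abelian, then $n\ge 8$.
   Context: $\mathbb{R}^{r,s}$ denotes $\mathbb{R}^{n}$, $n=r+s$, with a nondegenerate symmetric bilinear form of signature $(r,s)$; $\mathrm{Iso}(\mathbb{R}^{r,s})$ is its group of affine isometries, whose elements are written $\gamma=(I+A,v)\colon x\mapsto(I+A)x+v$; $\mathrm{hol}(\Gamma)=\{I+A\mid (I+A,v)\in\Gamma\}$. Known facts (Wolf) for such $\Gamma$: every $(I+A,v)\in\Gamma$ satisfies $A^2=0$, $Av=0$, $\langle Ax,y\rangle=-\langle x,Ay\rangle$, $\ker A=(\operatorname{im}A)^\perp$, $\operatorname{im}A$ totally isotropic; for $\gamma_i=(I+A_i,v_i)\in\Gamma$ one has $A_1A_2A_3=0$ and $[\gamma_1,\gamma_2]=(I+2A_1A_2,2A_1v_2)$; $\mathrm{hol}(\Gamma)$ is abelian iff $A_1A_2=0$ for all $(I+A_1,v_1),(I+A_2,v_2)\in\Gamma$. *)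

theory Defs
  imports "HOL-Analysis.Analysis"
begin

text \<open>The pseudo-Euclidean space R^{r,s}: real^'n with the diagonal form
  given by a sign vector eps (eps i = 1 for r coordinates, -1 for s coordinates).\<close>

definition pform :: "('n::finite \<Rightarrow> real) \<Rightarrow> real^'n \<Rightarrow> real^'n \<Rightarrow> real" where
  "pform eps x y = (\<Sum>i\<in>UNIV. eps i * (x $ i) * (y $ i))"

definition Iso :: "('n::finite \<Rightarrow> real) \<Rightarrow> (real^'n \<Rightarrow> real^'n) set" where
  "Iso eps = {f. \<exists>(A::real^'n^'n) v. (\<forall>x. f x = A *v x + v) \<and>
                 (\<forall>x y. pform eps (A *v x) (A *v y) = pform eps x y)}"

definition is_subgroup_Iso :: "('n::finite \<Rightarrow> real) \<Rightarrow> (real^'n \<Rightarrow> real^'n) set \<Rightarrow> bool" where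
  "is_subgroup_Iso eps \<Gamma> \<longleftrightarrow> \<Gamma> \<subseteq> Iso eps \<and> id \<in> \<Gamma> \<and>
     (\<forall>f\<in>\<Gamma>. \<forall>g\<in>\<Gamma>. f \<circ> g \<in> \<Gamma>) \<and> (\<forall>f\<in>\<Gamma>. inv f \<in> \<Gamma>)"

definition centralizer_Iso :: "('n::finite \<Rightarrow> real) \<Rightarrow> (real^'n \<Rightarrow> real^'n) set \<Rightarrow> (real^'n \<Rightarrow> real^'n) set" where
  "centralizer_Iso eps \<Gamma> = {h \<in> Iso eps. \<forall>g\<in>\<Gamma>. h \<circ> g = g \<circ> h}"

definition has_open_orbit :: "(real^'n::finite \<Rightarrow> real^'n) set \<Rightarrow> bool" where
  "has_open_orbit H \<longleftrightarrow> (\<exists>x. open ((\<lambda>h. h x) ` H))"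

definition linpart :: "(real^'n::finite \<Rightarrow> real^'n) \<Rightarrow> (real^'n \<Rightarrow> real^'n)" where
  "linpart f = (\<lambda>x. f x - f 0)"

definition hol :: "(real^'n::finite \<Rightarrow> real^'n) set \<Rightarrow> (real^'n \<Rightarrow> real^'n) set" where
  "hol \<Gamma> = linpart ` \<Gamma>"

definition is_abelian :: "('a \<Rightarrow> 'a) set \<Rightarrow> bool" where
  "is_abelian H \<longleftrightarrow> (\<forall>f\<in>H. \<forall>g\<in>H. f \<circ> g = g \<circ> f)"

end

theory Submission
  imports Defs
begin

(* Write an isometry g as x \<mapsto> g 0 + x + A x with A = Apart g linear.
   For g1, g2 \<in> \<Gamma> the function y \<mapsto> <g1 y - y, g2 y - y> is invariant under the centralizer
   of \<Gamma>, hence constant on its orbits, in particular on an open set.  Along a line through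
   an interior point it is a quadratic polynomial, whose leading coefficient <A1 z, A2 z> must
   therefore vanish.  Polarizing and using that I + A preserves the form yields the algebraic
   relations: A is skew-adjoint, A1 A2 = - A2 A1 and A^2 = 0.

   If hol(\<Gamma>) is non-abelian, some C = A1 A2 is non-zero; being skew-adjoint it has rank at
   least 2.  Its image lies in A2 (im A1), which is killed by A2, so the rank-nullity type
   estimate "an independent set in f(W) \<inter> ker f lifts to one of twice the size in W" gives
   dim (im A1) \<ge> 4; a second application with A1 (im A1 \<subseteq> ker A1) gives n \<ge> 8. *)

lemma pform_sym: "pform e x y = pform e y x"
  by (simp add: pform_def mult_ac)

lemma pform_add_left: "pform e (x + y) z = pform e x z + pform e y z"
  by (simp add: pform_def algebra_simps sum.distrib)

lemma pform_add_right: "pform e z (x + y) = pform e z x + pform e z y"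
  by (simp add: pform_def algebra_simps sum.distrib)

lemma pform_scale_left: "pform e (c *\<^sub>R x) y = c * pform e x y"
  by (simp add: pform_def sum_distrib_left mult_ac)

lemma pform_scale_right: "pform e y (c *\<^sub>R x) = c * pform e y x"
  by (simp add: pform_def sum_distrib_left mult_ac)

lemma pform_minus_right: "pform e y (- x) = - pform e y x"
  by (simp add: pform_def sum_negf)

text \<open>With signs \<open>\<pm>1\<close>, pairing \<open>z\<close> with its sign-twisted copy gives the Euclidean norm;
  this is what makes the form nondegenerate.\<close>

lemma pform_sign_twist:
  assumes "\<forall>i. e i = 1 \<or> e i = -1"
  shows "pform e z (\<chi> i. e i * z $ i) = z \<bullet> z"
proof -
  have "e i * z $ i * (e i * z $ i) = z $ i * z $ i" for i
  proof -
    have "e i * e i = 1" using assms by (metis mult_1 mult_minus1 minus_minus)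
    then show ?thesis by (metis mult.assoc mult.left_commute mult_1)
  qed
  then have "(\<Sum>i\<in>UNIV. e i * z $ i * (e i * z $ i)) = (\<Sum>i\<in>UNIV. z $ i * z $ i)"
    by (rule sum.cong[OF refl])
  then show ?thesis by (simp add: pform_def inner_vec_def)
qed

lemma pform_nondegenerate:
  assumes "\<forall>i. e i = 1 \<or> e i = -1" and "\<forall>x. pform e x z = 0"
  shows "z = 0"
  using assms pform_sign_twist[OF assms(1), of z] pform_sym by (metis inner_eq_zero_iff)

section \<open>Lifting independent sets along a linear map\<close>

lemma independent_lift:
  fixes f :: "'a::euclidean_space \<Rightarrow> 'b::euclidean_space"
  assumes lf: "linear f" and iS: "independent S" and fS: "\<forall>x\<in>S. f x = 0"
    and iU: "independent U" and UW: "U \<subseteq> f ` W"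
  shows "\<exists>T. T \<subseteq> W \<and> independent (S \<union> T) \<and> card (S \<union> T) = card S + card U"
proof -
  have "\<forall>u\<in>U. \<exists>w. w \<in> W \<and> f w = u" using UW by blast
  then obtain g where gW: "\<And>u. u \<in> U \<Longrightarrow> g u \<in> W \<and> f (g u) = u"
    using bchoice by metis
  have inj: "inj_on g U" by (metis gW inj_onI)
  define T where "T = g ` U"
  have fU: "finite U" and fS': "finite S" using iU iS independent_explicit by blast+
  have fT: "finite T" using fU T_def by simp
  have "0 \<notin> U" using iU by (metis real_vector.dependent_zero)
  then have disj: "S \<inter> T = {}" using fS gW unfolding T_def by fastforce
  have indep: "independent (S \<union> T)"
    unfolding independent_explicit
  proof (intro conjI allI impI ballI)
    show "finite (S \<union> T)" using fT fS' by simp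
    fix c v assume "(\<Sum>v\<in>S \<union> T. c v *\<^sub>R v) = 0" and v: "v \<in> S \<union> T"
    then have split: "(\<Sum>v\<in>S. c v *\<^sub>R v) + (\<Sum>v\<in>T. c v *\<^sub>R v) = 0"
      using sum.union_disjoint[OF fS' fT disj, of "\<lambda>v. c v *\<^sub>R v"] by simp
    text \<open>Applying \<open>f\<close> kills the \<open>S\<close>-part and maps the \<open>T\<close>-part onto a combination of \<open>U\<close>.\<close>
    have "f ((\<Sum>v\<in>S. c v *\<^sub>R v) + (\<Sum>v\<in>T. c v *\<^sub>R v)) = 0"
      using split linear_0[OF lf] by simp
    then have "(\<Sum>v\<in>S. c v *\<^sub>R f v) + (\<Sum>v\<in>T. c v *\<^sub>R f v) = 0"
      by (simp add: linear_add[OF lf] linear_sum[OF lf] linear_cmul[OF lf])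
    then have "(\<Sum>v\<in>T. c v *\<^sub>R f v) = 0" using fS by simp
    then have "(\<Sum>u\<in>U. c (g u) *\<^sub>R u) = 0"
      unfolding T_def using sum.reindex[OF inj, of "\<lambda>v. c v *\<^sub>R f v"] gW by simp
    moreover have indU: "\<And>d. (\<Sum>u\<in>U. d u *\<^sub>R u) = 0 \<Longrightarrow> \<forall>u\<in>U. d u = 0"
      using iU unfolding independent_explicit by blast
    ultimately have "\<forall>u\<in>U. c (g u) = 0" using indU[of "\<lambda>u. c (g u)"] by blast
    then have cT: "\<forall>v\<in>T. c v = 0" unfolding T_def by blast
    then have "(\<Sum>v\<in>S. c v *\<^sub>R v) = 0" using split by simp
    then have "\<forall>v\<in>S. c v = 0" using iS unfolding independent_explicit by blast
    then show "c v = 0" using cT v by blast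
  qed
  have "card (S \<union> T) = card S + card U"
    using card_Un_disjoint[OF fS' fT disj] card_image[OF inj] T_def by simp
  moreover have "T \<subseteq> W" using gW T_def by auto
  ultimately show ?thesis using indep by blast
qed

lemma independent_double:
  fixes f :: "'a::euclidean_space \<Rightarrow> 'a"
  assumes "linear f" "independent V" "V \<subseteq> f ` W" "\<forall>v\<in>V. f v = 0"
  shows "\<exists>T. T \<subseteq> W \<and> independent (V \<union> T) \<and> card (V \<union> T) = 2 * card V"
  using independent_lift[OF assms(1,2,4,2,3)] by (simp add: mult_2)

definition Apart :: "(real^'n::finite \<Rightarrow> real^'n) \<Rightarrow> real^'n \<Rightarrow> real^'n" where
  "Apart g x = g x - g 0 - x"

lemma Iso_Apart:
  assumes "g \<in> Iso e"
  shows "linear (Apart g)" and "g x = g 0 + x + Apart g x"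
    and "pform e (x + Apart g x) (y + Apart g y) = pform e x y"
proof -
  obtain M v where gM: "\<And>x. g x = M *v x + v"
    and pM: "\<And>x y. pform e (M *v x) (M *v y) = pform e x y"
    using assms unfolding Iso_def by blast
  have A: "Apart g = (\<lambda>x. M *v x - x)" unfolding Apart_def using gM by (intro ext) simp
  show "linear (Apart g)" unfolding A
    by (intro linear_compose_sub matrix_vector_mul_linear) (simp add: linear_iff)
  show "g x = g 0 + x + Apart g x" unfolding Apart_def by simp
  show "pform e (x + Apart g x) (y + Apart g y) = pform e x y" using A pM by simp
qed

lemma Iso_displacement:
  assumes "g \<in> Iso e"
  shows "g y - y = (g x0 - x0) + Apart g (y - x0)"
  using Iso_Apart[OF assms] linear_diff[OF Iso_Apart(1)[OF assms]]
  by (metis (no_types, lifting) add_diff_cancel_left' diff_add_eq diff_diff_eq2 Apart_def)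

lemma id_Iso: "id \<in> Iso e"
  unfolding Iso_def by (rule CollectI, rule exI[of _ "mat 1"], rule exI[of _ 0]) simp

lemma centralizer_preserves_displacement_pairing:
  assumes "h \<in> centralizer_Iso e \<Gamma>" "g1 \<in> \<Gamma>" "g2 \<in> \<Gamma>"
  shows "pform e (g1 (h x) - h x) (g2 (h x) - h x) = pform e (g1 x - x) (g2 x - x)"
proof -
  obtain M v where hM: "\<And>x. h x = M *v x + v" and pM: "\<And>x y. pform e (M *v x) (M *v y) = pform e x y"
    using assms(1) unfolding centralizer_Iso_def Iso_def by blast
  have "g1 (h x) = h (g1 x)" "g2 (h x) = h (g2 x)"
    using assms unfolding centralizer_Iso_def by (metis (mono_tags, lifting) comp_apply mem_Collect_eq)+
  then have "g1 (h x) - h x = M *v (g1 x - x)" "g2 (h x) - h x = M *v (g2 x - x)"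
    by (simp_all add: hM matrix_vector_mult_diff_distrib)
  then show ?thesis using pM by simp
qed

text \<open>A function \<open>y \<mapsto> <d1 + A1 (y - x0), d2 + A2 (y - x0)>\<close> constant on a ball has vanishing
  quadratic part: along \<open>x0 + s z\<close> it is \<open>a + s b + s\<^sup>2 <A1 z, A2 z>\<close>.\<close>

lemma quadratic_vanishes_on_ball:
  fixes A1 A2 :: "real^'n::finite \<Rightarrow> real^'n"
  assumes "linear A1" "linear A2" "\<epsilon> > 0"
    and const: "\<forall>y\<in>ball x0 \<epsilon>. pform e (d1 + A1 (y - x0)) (d2 + A2 (y - x0)) = pform e d1 d2"
  shows "pform e (A1 z) (A2 z) = 0"
proof -
  define t where "t = \<epsilon> / (2 * (norm z + 1))"
  have denom: "2 * (norm z + 1) > 0" by (smt (verit) norm_ge_zero)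
  then have "t > 0" using \<open>\<epsilon> > 0\<close> by (simp add: t_def)
  have "t * norm z < t * (2 * (norm z + 1))"
    using \<open>t > 0\<close> by (intro mult_strict_left_mono) (smt (verit) norm_ge_zero)+
  also have "\<dots> = \<epsilon>" unfolding t_def using denom by simp
  finally have small: "t * norm z < \<epsilon>" .
  define b where "b = pform e d1 (A2 z) + pform e (A1 z) d2"
  define c where "c = pform e (A1 z) (A2 z)"
  have "s * b + s * s * c = 0" if "\<bar>s\<bar> = t" for s
  proof -
    have "x0 + s *\<^sub>R z \<in> ball x0 \<epsilon>" using that small by (simp add: dist_norm)
    then have "pform e (d1 + s *\<^sub>R A1 z) (d2 + s *\<^sub>R A2 z) = pform e d1 d2"
      using const linear_cmul[OF assms(1)] linear_cmul[OF assms(2)] by fastforce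
    then show ?thesis unfolding b_def c_def
      by (simp add: pform_add_left pform_add_right pform_scale_left pform_scale_right algebra_simps)
  qed
  from this[of t] this[of "-t"] have "t * b + t * t * c = 0" "- (t * b) + t * t * c = 0"
    using \<open>t > 0\<close> by simp_all
  then have "t * t * c = 0" by linarith
  then show ?thesis using \<open>t > 0\<close> unfolding c_def by simp
qed

section \<open>Wolf's relations\<close>

text \<open>These relations only need \<open>\<Gamma>\<close> to consist of isometries, not to be a group.\<close>

locale isometries_open_centralizer_orbit =
  fixes eps :: "'n::finite \<Rightarrow> real" and \<Gamma> :: "(real^'n \<Rightarrow> real^'n) set"
  assumes signs: "\<forall>i. eps i = 1 \<or> eps i = -1"
    and \<Gamma>_Iso: "\<Gamma> \<subseteq> Iso eps"
    and open_orbit: "has_open_orbit (centralizer_Iso eps \<Gamma>)"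
begin

lemma linear_Apart: "g \<in> \<Gamma> \<Longrightarrow> linear (Apart g)"
  using Iso_Apart(1) \<Gamma>_Iso by blast

lemma Apart_pairing_zero:
  assumes g1: "g1 \<in> \<Gamma>" and g2: "g2 \<in> \<Gamma>"
  shows "pform eps (Apart g1 z) (Apart g2 z) = 0"
proof -
  let ?Z = "centralizer_Iso eps \<Gamma>"
  obtain x0 where op: "open ((\<lambda>h. h x0) ` ?Z)" using open_orbit unfolding has_open_orbit_def by blast
  have "id \<in> ?Z" unfolding centralizer_Iso_def using id_Iso by simp
  then have "x0 \<in> (\<lambda>h. h x0) ` ?Z" by (metis id_apply image_eqI)
  then obtain \<epsilon> where \<epsilon>: "\<epsilon> > 0" "ball x0 \<epsilon> \<subseteq> (\<lambda>h. h x0) ` ?Z"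
    using op open_contains_ball by blast
  have "pform eps ((g1 x0 - x0) + Apart g1 (y - x0)) ((g2 x0 - x0) + Apart g2 (y - x0))
      = pform eps (g1 x0 - x0) (g2 x0 - x0)" if y: "y \<in> ball x0 \<epsilon>" for y
  proof -
    obtain h where h: "h \<in> ?Z" "y = h x0" using \<epsilon>(2) y by blast
    have "pform eps (g1 y - y) (g2 y - y) = pform eps (g1 x0 - x0) (g2 x0 - x0)"
      using centralizer_preserves_displacement_pairing[OF h(1) g1 g2] h(2) by simp
    moreover have "g1 y - y = (g1 x0 - x0) + Apart g1 (y - x0)" "g2 y - y = (g2 x0 - x0) + Apart g2 (y - x0)"
      using Iso_displacement g1 g2 \<Gamma>_Iso by blast+
    ultimately show ?thesis by simp
  qed
  then show ?thesis
    using quadratic_vanishes_on_ball[OF linear_Apart[OF g1] linear_Apart[OF g2] \<epsilon>(1)] by blast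
qed

lemma Apart_pairing_polarized:
  assumes g: "g1 \<in> \<Gamma>" "g2 \<in> \<Gamma>"
  shows "pform eps (Apart g1 x) (Apart g2 y) + pform eps (Apart g1 y) (Apart g2 x) = 0"
  using Apart_pairing_zero[OF g, of "x + y"] Apart_pairing_zero[OF g, of x] Apart_pairing_zero[OF g, of y]
  by (simp add: linear_add[OF linear_Apart[OF g(1)]] linear_add[OF linear_Apart[OF g(2)]]
      pform_add_left pform_add_right)

lemma Apart_isotropic: "g \<in> \<Gamma> \<Longrightarrow> pform eps (Apart g x) (Apart g y) = 0"
  using Apart_pairing_polarized[of g g x y] pform_sym[of eps "Apart g y"] by simp

lemma Apart_skew:
  assumes "g \<in> \<Gamma>"
  shows "pform eps (Apart g x) y = - pform eps x (Apart g y)"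
  using Iso_Apart(3)[of g eps x y] Apart_isotropic[OF assms, of x y] assms \<Gamma>_Iso
  by (auto simp: pform_add_left pform_add_right)

lemma Apart_square_zero:
  assumes "g \<in> \<Gamma>"
  shows "Apart g (Apart g y) = 0"
proof (rule pform_nondegenerate[OF signs], rule allI)
  fix x
  have "pform eps x (Apart g (Apart g y)) = - pform eps (Apart g x) (Apart g y)"
    using Apart_skew[OF assms] by simp
  then show "pform eps x (Apart g (Apart g y)) = 0" using Apart_isotropic[OF assms] by simp
qed

lemma Apart_anticommute:
  assumes g: "g1 \<in> \<Gamma>" "g2 \<in> \<Gamma>"
  shows "Apart g1 (Apart g2 y) = - Apart g2 (Apart g1 y)"
proof -
  have "pform eps x (Apart g1 (Apart g2 y) + Apart g2 (Apart g1 y)) = 0" for x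
  proof -
    have "pform eps x (Apart g1 (Apart g2 y) + Apart g2 (Apart g1 y))
        = - pform eps (Apart g1 x) (Apart g2 y) - pform eps (Apart g2 x) (Apart g1 y)"
      using Apart_skew[OF g(1), of x] Apart_skew[OF g(2), of x] by (simp add: pform_add_right)
    also have "\<dots> = 0"
      using Apart_pairing_polarized[OF g, of x y] pform_sym[of eps "Apart g2 x" "Apart g1 y"] by simp
    finally show ?thesis .
  qed
  then have "Apart g1 (Apart g2 y) + Apart g2 (Apart g1 y) = 0"
    using pform_nondegenerate[OF signs] by blast
  then show ?thesis by (simp add: eq_neg_iff_add_eq_0)
qed

end

section \<open>Dimension bound\<close>

text \<open>A non-zero skew-adjoint operator has rank at least two: if \<open>C x \<noteq> 0\<close> pick \<open>q\<close> with
  \<open><C x, q> \<noteq> 0\<close>; then \<open><x, C q> \<noteq> 0\<close> while \<open><C q, q> = 0\<close>, so \<open>C q\<close> is not a multiple of \<open>C x\<close>.\<close>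

lemma skew_operator_rank_two:
  assumes signs: "\<forall>i. eps i = 1 \<or> eps i = -1"
    and skew: "\<And>a b. pform eps (C a) b = - pform eps a (C b)" and "C x \<noteq> 0"
  shows "\<exists>q. independent {C q, C x} \<and> card {C q, C x} = 2"
proof -
  define q where "q = (\<chi> i. eps i * C x $ i)"
  have xq: "pform eps (C x) q \<noteq> 0" unfolding q_def using pform_sign_twist[OF signs] \<open>C x \<noteq> 0\<close> by simp
  have qq: "pform eps (C q) q = 0" using skew[of q q] pform_sym[of eps q "C q"] by simp
  have "C q \<notin> span {C x}"
  proof
    assume "C q \<in> span {C x}"
    then obtain c where c: "C q = c *\<^sub>R C x" by (auto simp: span_singleton)
    then have "c = 0" using qq xq by (simp add: pform_scale_left)
    then show False using c xq skew[of x q] by (simp add: pform_def)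
  qed
  then have "independent {C q, C x}" "C q \<noteq> C x"
    using \<open>C x \<noteq> 0\<close> span_base[of "C x" "{C x}"] by (auto simp: independent_insert)
  then show ?thesis by auto
qed

context isometries_open_centralizer_orbit
begin

text \<open>Two elements with non-commuting linear parts force dimension at least 8:
  \<open>im (A1 A2)\<close> has dimension \<open>\<ge> 2\<close>, lies in \<open>A2 (im A1) \<subseteq> ker A2\<close>, so \<open>dim (im A1) \<ge> 4\<close>;
  and \<open>im A1 \<subseteq> ker A1\<close>.\<close>

lemma noncommuting_dimension:
  assumes g1: "g1 \<in> \<Gamma>" and g2: "g2 \<in> \<Gamma>" and nc: "Apart g1 (Apart g2 x) \<noteq> Apart g2 (Apart g1 x)"
  shows "CARD('n) \<ge> 8"
proof -
  define C where "C y = Apart g1 (Apart g2 y)" for y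
  have lin1: "linear (Apart g1)" and lin2: "linear (Apart g2)" using linear_Apart g1 g2 by blast+
  have "C x \<noteq> 0" using nc Apart_anticommute[OF g1 g2, of x] unfolding C_def by auto
  moreover have "pform eps (C a) b = - pform eps a (C b)" for a b
    unfolding C_def using Apart_skew[OF g1] Apart_skew[OF g2] Apart_anticommute[OF g2 g1, of b]
    by (simp add: pform_minus_right)
  ultimately obtain q where V: "independent {C q, C x}" "card {C q, C x} = 2"
    using skew_operator_rank_two[OF signs] by blast
  have C_in_A1: "C y \<in> range (Apart g1)" for y unfolding C_def by simp
  have C_in_A2A1: "C y \<in> Apart g2 ` range (Apart g1)" for y
    using Apart_anticommute[OF g1 g2, of y] linear_neg[OF lin1, of y] unfolding C_def
    by (metis linear_neg[OF lin2] rangeI image_eqI)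
  have C_ker_A2: "Apart g2 (C y) = 0" for y
    unfolding C_def using Apart_anticommute[OF g2 g1, of "Apart g2 y"] Apart_square_zero[OF g2, of y]
      linear_0[OF lin1] by simp
  obtain T where T: "T \<subseteq> range (Apart g1)" "independent ({C q, C x} \<union> T)" "card ({C q, C x} \<union> T) = 4"
    using independent_double[OF lin2 V(1), of "range (Apart g1)"] C_in_A2A1 C_ker_A2 V(2) by auto
  define W where "W = {C q, C x} \<union> T"
  have "W \<subseteq> range (Apart g1)" using T(1) C_in_A1 unfolding W_def by auto
  moreover have "\<forall>w\<in>W. Apart g1 w = 0" using calculation Apart_square_zero[OF g1] by auto
  ultimately obtain T' where "independent (W \<union> T')" "card (W \<union> T') = 8"
    using independent_double[OF lin1 T(2)[folded W_def]] T(3) W_def by force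
  then show ?thesis using independent_card_le_dim[of "W \<union> T'" UNIV] by simp
qed

end

lemma linpart_Apart: "linpart g x = x + Apart g x"
  unfolding linpart_def Apart_def by simp

lemma card_signs:
  fixes eps :: "'n::finite \<Rightarrow> real"
  assumes "\<forall>i. eps i = 1 \<or> eps i = -1"
  shows "card {i. eps i = 1} + card {i. eps i = -1} = CARD('n)"
proof -
  have "{i. eps i = 1} \<union> {i. eps i = -1} = (UNIV :: 'n set)" using assms by auto
  moreover have "{i. eps i = 1} \<inter> {i. eps i = -1} = {}" by auto
  ultimately show ?thesis using card_Un_disjoint[of "{i. eps i = 1}" "{i. eps i = -1}"] by simp
qed

theorem theorem5p1:
  fixes eps :: "'n::finite \<Rightarrow> real" and \<Gamma> :: "(real^'n \<Rightarrow> real^'n) set" and r s :: nat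
  assumes "\<forall>i. eps i = 1 \<or> eps i = -1"
    and "r = card {i. eps i = 1}" and "s = card {i. eps i = -1}"
    and "is_subgroup_Iso eps \<Gamma>"
    and "has_open_orbit (centralizer_Iso eps \<Gamma>)"
    and "\<not> is_abelian (hol \<Gamma>)"
  shows "r + s \<ge> 8"
proof -
  interpret isometries_open_centralizer_orbit eps \<Gamma>
    using assms(1,4,5) by unfold_locales (auto simp: is_subgroup_Iso_def)
  obtain g1 g2 x where g: "g1 \<in> \<Gamma>" "g2 \<in> \<Gamma>"
    and "linpart g1 (linpart g2 x) \<noteq> linpart g2 (linpart g1 x)"
    using assms(6) unfolding is_abelian_def hol_def by (auto simp: fun_eq_iff)
  then have "Apart g1 (Apart g2 x) \<noteq> Apart g2 (Apart g1 x)"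
    using linear_add[OF linear_Apart[OF g(1)]] linear_add[OF linear_Apart[OF g(2)]]
    by (simp add: linpart_Apart algebra_simps)
  then show ?thesis
    using noncommuting_dimension[OF g] card_signs[OF assms(1)] assms(2,3) by simp
qed

end
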